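(* Let $A$ be a finite set and let $f,g$ be partial functions on $A$ with $f \in \mathrm{cPol}(\rho,\rho')$ and $g \in \mathrm{cPol}(\sigma,\sigma')$, where $\rho'\subseteq\rho\subseteq A^h$, $\sigma'\subseteq\sigma\subseteq A^h$ and $\sigma' \subseteq \rho \subseteq \sigma$. Then $f \star g \in \mathrm{cPol}(\rho,\rho')$.
   Context: A partial function of arity $n$ on $A$ is a map $f:\operatorname{dom} f\to A$ with $\operatorname{dom} f\subseteq A^n$. An $n$-ary $f$ preserves the relation pair $(\rho,\rho')$ with $\rho'\subseteq\rho\subseteq A^h$ (written $f\in\mathrm{cPol}(\rho,\rho')$) if for every $h\times n$ matrix whose columns belong to $\rho$ and whose rows belong to $\operatorname{dom} f$, the column obtained by applying $f$ to each row belongs to $\rho'$. For $f$ $n$-ary and $g$ $m$-ary, $f\star g$ is the $(n+m-1)$-ary partial function $(f\star g)(x_1,\dots,x_{n+m-1})=f(g(x_1,\dots,x_m),x_{m+1},\dots,x_{n+m-1})$, defined exactly when $(x_1,\dots,x_m)\in\operatorname{dom} g$ and $(g(x_1,\dots,x_m),x_{m+1},\dots,x_{n+m-1})\in\operatorname{dom} f$. *)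

theory Defs
  imports Main
begin

definition tuples :: "'a set \<Rightarrow> nat \<Rightarrow> 'a list set" where
  "tuples A k = {xs. length xs = k \<and> set xs \<subseteq> A}"

definition is_pfun :: "'a set \<Rightarrow> nat \<Rightarrow> ('a list \<rightharpoonup> 'a) \<Rightarrow> bool" where
  "is_pfun A n f \<longleftrightarrow> dom f \<subseteq> tuples A n \<and> ran f \<subseteq> A"

text \<open>An h x n matrix is given as the list of its n columns (each of length h);
  row i is the list of the i-th entries of the columns.\<close>

definition mrow :: "'a list list \<Rightarrow> nat \<Rightarrow> 'a list" where
  "mrow cols i = map (\<lambda>c. c ! i) cols"

definition cPol :: "nat \<Rightarrow> nat \<Rightarrow> 'a list set \<Rightarrow> 'a list set \<Rightarrow> ('a list \<rightharpoonup> 'a) \<Rightarrow> bool" where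
  "cPol n h \<rho> \<rho>' f \<longleftrightarrow>
     (\<forall>cols. length cols = n \<and> set cols \<subseteq> \<rho> \<and> (\<forall>i<h. mrow cols i \<in> dom f)
        \<longrightarrow> map (\<lambda>i. the (f (mrow cols i))) [0..<h] \<in> \<rho>')"

definition pstar :: "nat \<Rightarrow> nat \<Rightarrow> ('a list \<rightharpoonup> 'a) \<Rightarrow> ('a list \<rightharpoonup> 'a) \<Rightarrow> ('a list \<rightharpoonup> 'a)" where
  "pstar n m f g = (\<lambda>xs. if length xs = n + m - 1 then
      (case g (take m xs) of None \<Rightarrow> None | Some y \<Rightarrow> f (y # drop m xs)) else None)"

end

theory Submission
  imports Defs
begin

text \<open>Given a matrix whose columns lie in \<rho> and whose rows lie in the domain of f \<star> g,
  apply g row-wise to its first m columns. Since \<rho> \<subseteq> \<sigma>, the resulting column lies in \<sigma>',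
  hence in \<rho>. Replacing the first m columns by it gives a matrix with columns in \<rho> whose
  rows are exactly the arguments f receives in f \<star> g, so f maps it into \<rho>'.\<close>

lemma mrow_take: "mrow (take m cols) i = take m (mrow cols i)"
  by (simp add: mrow_def take_map)

lemma mrow_drop: "mrow (drop m cols) i = drop m (mrow cols i)"
  by (simp add: mrow_def drop_map)

lemma mrow_Cons: "i < length c \<Longrightarrow> mrow (c # cols) i = c ! i # mrow cols i"
  by (simp add: mrow_def)

lemma pstar_eq_Some_iff:
  "pstar n m f g xs = Some z \<longleftrightarrow>
     length xs = n + m - 1 \<and> (\<exists>y. g (take m xs) = Some y \<and> f (y # drop m xs) = Some z)"
  by (auto simp: pstar_def split: option.splits)

lemma cPol_pstar:
  assumes "n \<ge> 1" and "\<rho> \<subseteq> \<sigma>" and "\<sigma>' \<subseteq> \<rho>"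
    and f: "cPol n h \<rho> \<rho>' f" and g: "cPol m h \<sigma> \<sigma>' g"
  shows "cPol (n + m - 1) h \<rho> \<rho>' (pstar n m f g)"
  unfolding cPol_def
proof (intro allI impI, elim conjE)
  fix cols :: "'a list list"
  assume len: "length cols = n + m - 1" and cols_in: "set cols \<subseteq> \<rho>"
    and rows: "\<forall>i<h. mrow cols i \<in> dom (pstar n m f g)"
  have g_row: "\<exists>y. g (take m (mrow cols i)) = Some y \<and>
      f (y # drop m (mrow cols i)) = pstar n m f g (mrow cols i)" if i: "i < h" for i
  proof -
    obtain z where "pstar n m f g (mrow cols i) = Some z"
      using rows i by blast
    then show ?thesis by (metis pstar_eq_Some_iff)
  qed
  define gcol where "gcol = map (\<lambda>i. the (g (mrow (take m cols) i))) [0..<h]"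
  have "set (take m cols) \<subseteq> \<sigma>"
    using cols_in \<open>\<rho> \<subseteq> \<sigma>\<close> by (auto dest: in_set_takeD)
  moreover have "\<forall>i<h. mrow (take m cols) i \<in> dom g"
    using g_row by (auto simp: mrow_take)
  ultimately have "gcol \<in> \<sigma>'"
    using g len \<open>n \<ge> 1\<close> unfolding cPol_def gcol_def by simp
  with \<open>\<sigma>' \<subseteq> \<rho>\<close> have gcol_in: "gcol \<in> \<rho>" by blast
  define cols' where "cols' = gcol # drop m cols"
  have row': "f (mrow cols' i) = pstar n m f g (mrow cols i)" if "i < h" for i
    using g_row[OF that] that
    by (auto simp: cols'_def gcol_def mrow_Cons mrow_take mrow_drop)
  have "length cols' = n"
    using len \<open>n \<ge> 1\<close> by (simp add: cols'_def)
  moreover have "set cols' \<subseteq> \<rho>"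
    using cols_in gcol_in by (auto simp: cols'_def dest: in_set_dropD)
  moreover have "\<forall>i<h. mrow cols' i \<in> dom f"
    using rows row' by (simp add: domIff)
  ultimately have "map (\<lambda>i. the (f (mrow cols' i))) [0..<h] \<in> \<rho>'"
    using f unfolding cPol_def by blast
  then show "map (\<lambda>i. the (pstar n m f g (mrow cols i))) [0..<h] \<in> \<rho>'"
    using row' by (metis (no_types, lifting) atLeastLessThan_iff map_eq_conv set_upt)
qed

theorem mainTheorem13:
  fixes A :: "'a set" and f g :: "'a list \<rightharpoonup> 'a" and n m h :: nat
    and \<rho> \<rho>' \<sigma> \<sigma>' :: "'a list set"
  assumes "finite A"
    and "n \<ge> 1"
    and "is_pfun A n f" and "is_pfun A m g"
    and "\<rho>' \<subseteq> \<rho>" and "\<rho> \<subseteq> tuples A h"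
    and "\<sigma>' \<subseteq> \<sigma>" and "\<sigma> \<subseteq> tuples A h"
    and "\<sigma>' \<subseteq> \<rho>" and "\<rho> \<subseteq> \<sigma>"
    and "cPol n h \<rho> \<rho>' f" and "cPol m h \<sigma> \<sigma>' g"
  shows "cPol (n + m - 1) h \<rho> \<rho>' (pstar n m f g)"
  using assms(2,10,9,11,12) by (rule cPol_pstar)

end
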